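(* For every $\theta\in\mathbb{R}$, $\displaystyle\lim_{n\to\infty}\hat\theta_n=\theta$ holds $P$-almost surely.
   Context: Fix $m>1/2$. Let $c_m:=\left(\int_{\mathbb R}(1+x^2)^{-m}\,dx\right)^{-1}$ and $f(x):=c_m(1+x^2)^{-m}$. For $\theta\in\mathbb R$, $\mathrm{PVII}_m(\theta,1)$ denotes the Pearson Type VII distribution with location $\theta$ and scale $1$, i.e. the law with density $x\mapsto f(x-\theta)$ (for $m=1$ this is the Cauchy distribution). Let $(X_n)_{n\ge1}$ be i.i.d. random variables on a probability space $(\Omega,\mathcal F,P)$ with law $\mathrm{PVII}_m(\theta,1)$. For each $n$, let $\hat\theta_n(x_1,\dots,x_n)$ be any Borel measurable function on $\mathbb R^n$ such that $\hat\theta_n(x_1,\dots,x_n)$ is a maximizer of $t\mapsto\prod_{i=1}^n f(x_i-t)$ over $t\in\mathbb R$ (such a measurable function exists), and let $\hat\theta_n:=\hat\theta_n(X_1,\dots,X_n)$ be the maximum likelihood estimator of the location. *)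

theory Defs
  imports "HOL-Probability.Probability"
begin

definition pvii_c :: "real \<Rightarrow> real" where
  "pvii_c m = 1 / (\<integral>x. (1 + x\<^sup>2) powr (-m) \<partial>lborel)"

definition pvii_f :: "real \<Rightarrow> real \<Rightarrow> real" where
  "pvii_f m x = pvii_c m * (1 + x\<^sup>2) powr (-m)"

end

theory Submission
  imports Defs
begin

text \<open>
  Put \<open>Y\<^sub>i = X\<^sub>i - \<theta>\<close> and \<open>\<ell>(s, y) = ln (1 + (y - s)\<^sup>2) - ln (1 + y\<^sup>2)\<close>; the likelihood at
  \<open>\<theta> + s\<close> is smaller than at \<open>\<theta>\<close> as soon as \<open>\<Sum>i<n. \<ell>(s, Y\<^sub>i) > 0\<close>. So it suffices that for
  every \<open>\<epsilon> > 0\<close>, almost surely, this sum is eventually positive simultaneously for all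
  \<open>|s| \<ge> \<epsilon>\<close>. For large \<open>|s|\<close> this holds because eventually at least 3/4 of the \<open>Y\<^sub>i\<close> lie
  in a fixed interval \<open>[-A, A]\<close>, where \<open>\<ell>(s, \<cdot>)\<close> is large, while \<open>\<ell>(s, \<cdot>) \<ge> -ln (2 (1 + s\<^sup>2))\<close>
  everywhere. On the compact rest \<open>\<epsilon> \<le> |s| \<le> S\<close> the mean \<open>E \<ell>(s, Y)\<close> is a
  Kullback-Leibler divergence divided by \<open>m\<close>, hence has a positive minimum \<open>\<kappa>\<close>. As
  \<open>\<ell>(s, \<cdot>)\<close> is bounded and 1-Lipschitz in \<open>s\<close>, the strong law of large numbers (proved here
  for bounded variables from Hoeffding's inequality and Borel-Cantelli) on a finite net of the
  compact set makes the averages uniformly \<open>\<kappa>\<close>-close to their means.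
\<close>

section \<open>Almost sure convergence of averages\<close>

lemma AE_LIMSEQ_if_AE_eventually_dist_less:
  fixes Y :: "nat \<Rightarrow> 'a \<Rightarrow> 'b::metric_space"
  assumes "\<And>\<epsilon>. 0 < \<epsilon> \<Longrightarrow> AE \<omega> in M. eventually (\<lambda>n. dist (Y n \<omega>) (l \<omega>) < \<epsilon>) sequentially"
  shows "AE \<omega> in M. (\<lambda>n. Y n \<omega>) \<longlonglongrightarrow> l \<omega>"
proof -
  have "AE \<omega> in M. \<forall>k::nat. eventually (\<lambda>n. dist (Y n \<omega>) (l \<omega>) < inverse (Suc k)) sequentially"
    unfolding AE_all_countable using assms by simp
  moreover have "(\<lambda>n. Y n \<omega>) \<longlonglongrightarrow> l \<omega>"
    if "\<forall>k::nat. eventually (\<lambda>n. dist (Y n \<omega>) (l \<omega>) < inverse (Suc k)) sequentially" for \<omega>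
  proof (rule tendstoI)
    fix \<epsilon> :: real assume "0 < \<epsilon>"
    then obtain k where k: "inverse (real (Suc k)) < \<epsilon>" using reals_Archimedean by blast
    show "eventually (\<lambda>n. dist (Y n \<omega>) (l \<omega>) < \<epsilon>) sequentially"
      using that[rule_format, of k] by (rule eventually_mono) (use k in linarith)
  qed
  ultimately show ?thesis by (rule eventually_mono)
qed

lemma (in prob_space) prob_average_deviation_le:
  fixes Y :: "nat \<Rightarrow> 'a \<Rightarrow> real"
  assumes indep: "indep_vars (\<lambda>_. borel) Y UNIV"
    and ident: "\<And>i. distr M borel (Y i) = distr M borel (Y 0)"
    and bounded: "AE \<omega> in M. \<bar>Y 0 \<omega>\<bar> \<le> B"
    and "0 < n" "0 < \<delta>"
  shows "prob {\<omega> \<in> space M. \<delta> \<le> \<bar>(\<Sum>i<n. Y i \<omega>) / n - expectation (Y 0)\<bar>}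
           \<le> 2 * exp (- real n * \<delta>\<^sup>2 / (2 * (\<bar>B\<bar> + 1)\<^sup>2))"
proof -
  have [measurable]: "Y i \<in> borel_measurable M" for i
    using indep by (auto simp: indep_vars_def)
  \<comment> \<open>Hoeffding on \<open>[-(|B| + 1), |B| + 1]\<close>: widened so that the interval is never degenerate.\<close>
  interpret Hoeffding_ineq_iid M "{..<n}" Y "Y 0" "- (\<bar>B\<bar> + 1)" "\<bar>B\<bar> + 1" "expectation (Y 0)"
  proof unfold_locales
    show "indep_vars (\<lambda>_. borel) Y {..<n}" by (rule indep_vars_subset[OF indep]) simp
    show "AE \<omega> in M. Y 0 \<omega> \<in> {- (\<bar>B\<bar> + 1)..\<bar>B\<bar> + 1}"
      using bounded by (auto elim!: eventually_mono)
  qed (use ident in auto)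
  have "prob {\<omega> \<in> space M. \<delta> \<le> \<bar>(\<Sum>i<n. Y i \<omega>) / n - expectation (Y 0)\<bar>}
      \<le> 2 * exp (-2 * real n * \<delta>\<^sup>2 / (\<bar>B\<bar> + 1 - - (\<bar>B\<bar> + 1))\<^sup>2)"
    by (rule Hoeffding_ineq_abs_ge'[unfolded card_lessThan]) (use \<open>0 < n\<close> \<open>0 < \<delta>\<close> in auto)
  also have "-2 * real n * \<delta>\<^sup>2 / (\<bar>B\<bar> + 1 - - (\<bar>B\<bar> + 1))\<^sup>2
      = - real n * \<delta>\<^sup>2 / (2 * (\<bar>B\<bar> + 1)\<^sup>2)"
  proof -
    have "(\<bar>B\<bar> + 1 - - (\<bar>B\<bar> + 1))\<^sup>2 = 4 * (\<bar>B\<bar> + 1)\<^sup>2"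
      by (simp add: power2_eq_square algebra_simps)
    then show ?thesis by simp
  qed
  finally show ?thesis .
qed

theorem (in prob_space) strong_law_bounded_iid:
  fixes Y :: "nat \<Rightarrow> 'a \<Rightarrow> real"
  assumes indep: "indep_vars (\<lambda>_. borel) Y UNIV"
    and ident: "\<And>i. distr M borel (Y i) = distr M borel (Y 0)"
    and bounded: "AE \<omega> in M. \<bar>Y 0 \<omega>\<bar> \<le> B"
  shows "AE \<omega> in M. (\<lambda>n. (\<Sum>i<n. Y i \<omega>) / n) \<longlonglongrightarrow> expectation (Y 0)"
proof (rule AE_LIMSEQ_if_AE_eventually_dist_less)
  fix \<delta> :: real assume "0 < \<delta>"
  have [measurable]: "Y i \<in> borel_measurable M" for i
    using indep by (auto simp: indep_vars_def)
  define D where "D n = {\<omega> \<in> space M. \<delta> \<le> \<bar>(\<Sum>i<n. Y i \<omega>) / n - expectation (Y 0)\<bar>}" for n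
  define q where "q = exp (- \<delta>\<^sup>2 / (2 * (\<bar>B\<bar> + 1)\<^sup>2))"
  have "q < 1" using \<open>0 < \<delta>\<close> by (simp add: q_def)
  have D_le: "measure M (D n) \<le> 2 * q ^ n" if "1 \<le> n" for n
  proof -
    have "exp (- real n * \<delta>\<^sup>2 / (2 * (\<bar>B\<bar> + 1)\<^sup>2)) = q ^ n"
      by (simp add: q_def flip: exp_of_nat_mult)
    then show ?thesis
      using prob_average_deviation_le[OF indep ident bounded _ \<open>0 < \<delta>\<close>, of n] that by (simp add: D_def)
  qed
  have "summable (\<lambda>n. 2 * q ^ n)"
    using \<open>q < 1\<close> by (intro summable_mult summable_geometric) (simp add: q_def)
  then have "summable (\<lambda>n. measure M (D n))"
    by (rule summable_comparison_test'[where N = 1]) (simp add: D_le)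
  moreover have "D n \<in> sets M" for n
    unfolding D_def by measurable
  ultimately have "AE \<omega> in M. eventually (\<lambda>n. \<omega> \<in> space M - D n) sequentially"
    by (intro borel_cantelli_AE1) (auto simp: emeasure_eq_measure)
  then show "AE \<omega> in M. eventually (\<lambda>n. dist ((\<Sum>i<n. Y i \<omega>) / n) (expectation (Y 0)) < \<delta>) sequentially"
    by (auto elim!: eventually_mono simp: D_def dist_real_def)
qed

lemma AE_eventually_uniform_on_compact:
  fixes F :: "nat \<Rightarrow> 'b::metric_space \<Rightarrow> 'a \<Rightarrow> real" and \<mu> :: "'b \<Rightarrow> real"
  assumes "compact K" and "0 < \<delta>"
    and lim: "\<And>t. t \<in> K \<Longrightarrow> AE \<omega> in M. (\<lambda>n. F n t \<omega>) \<longlonglongrightarrow> \<mu> t"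
    and F_lip: "\<And>n \<omega>. L-lipschitz_on K (\<lambda>t. F n t \<omega>)"
    and \<mu>_lip: "L-lipschitz_on K \<mu>"
  shows "AE \<omega> in M. eventually (\<lambda>n. \<forall>s\<in>K. \<bar>F n s \<omega> - \<mu> s\<bar> < \<delta>) sequentially"
proof -
  define r where "r = \<delta> / (4 * (L + 1))"
  have "0 \<le> L" using \<mu>_lip by (rule lipschitz_on_nonneg)
  then have "0 < r" and Lr: "2 * (L * r) < \<delta> / 2"
    using \<open>0 < \<delta>\<close> by (auto simp: r_def field_simps)
  obtain T where "T \<subseteq> K" "finite T" and cover: "K \<subseteq> (\<Union>t\<in>T. ball t r)"
    using compactE_image[OF \<open>compact K\<close>, of K "\<lambda>t. ball t r"] \<open>0 < r\<close> by force
  have "AE \<omega> in M. \<forall>t\<in>T. (\<lambda>n. F n t \<omega>) \<longlonglongrightarrow> \<mu> t"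
    using \<open>T \<subseteq> K\<close> by (intro AE_finite_allI[OF \<open>finite T\<close>] lim) auto
  then show ?thesis
  proof (rule eventually_mono)
    fix \<omega> assume "\<forall>t\<in>T. (\<lambda>n. F n t \<omega>) \<longlonglongrightarrow> \<mu> t"
    then have "eventually (\<lambda>n. \<forall>t\<in>T. \<bar>F n t \<omega> - \<mu> t\<bar> < \<delta> / 2) sequentially"
      using \<open>0 < \<delta>\<close> \<open>finite T\<close>
      by (intro eventually_ball_finite) (auto dest!: tendstoD[of _ _ _ "\<delta> / 2"] simp: dist_real_def)
    then show "eventually (\<lambda>n. \<forall>s\<in>K. \<bar>F n s \<omega> - \<mu> s\<bar> < \<delta>) sequentially"
    proof (rule eventually_mono, intro ballI)
      fix n s assume near: "\<forall>t\<in>T. \<bar>F n t \<omega> - \<mu> t\<bar> < \<delta> / 2" and "s \<in> K"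
      then obtain t where "t \<in> T" "dist t s < r" using cover by force
      with \<open>T \<subseteq> K\<close> \<open>0 \<le> L\<close> have "t \<in> K" and "L * dist s t \<le> L * r"
        by (auto simp: dist_commute intro: mult_left_mono)
      with \<open>s \<in> K\<close> have "\<bar>F n s \<omega> - F n t \<omega>\<bar> \<le> L * r" "\<bar>\<mu> s - \<mu> t\<bar> \<le> L * r"
        using lipschitz_onD[OF F_lip, of s t n \<omega>] lipschitz_onD[OF \<mu>_lip, of s t]
        by (auto simp: dist_real_def)
      moreover have "\<bar>F n t \<omega> - \<mu> t\<bar> < \<delta> / 2" using near \<open>t \<in> T\<close> by blast
      ultimately show "\<bar>F n s \<omega> - \<mu> s\<bar> < \<delta>" using Lr by linarith
    qed
  qed
qed

section \<open>Lebesgue integrals on the real line\<close>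

lemma integral_lborel_shift: "(\<integral>y. f (y - s) \<partial>lborel) = (\<integral>y. f y \<partial>lborel)"
  for f :: "real \<Rightarrow> real"
  using lborel_integral_real_affine[of 1 f "- s"] by simp

lemma integrable_lborel_shift: "integrable lborel f \<Longrightarrow> integrable lborel (\<lambda>y. f (y - s))"
  for f :: "real \<Rightarrow> real"
  using lborel_integrable_real_affine[of f 1 "- s"] by simp

lemma
  fixes g :: "real \<Rightarrow> real"
  assumes "prob_space M" and distr: "distributed M lborel Z (\<lambda>x. ennreal (g (x - \<theta>)))"
    and nonneg: "\<And>x. 0 \<le> g x"
  shows integrable_shifted_density: "integrable lborel g"
    and integral_shifted_density: "(\<integral>y. g y \<partial>lborel) = 1"
proof -
  have [measurable]: "Z \<in> borel_measurable M"
    using distr by (simp add: distributed_def)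
  have [measurable]: "(\<lambda>x. g (x - \<theta>)) \<in> borel_measurable borel"
    using distributed_real_measurable[OF _ distr] nonneg by simp
  interpret prob_space "distr M lborel Z"
    using assms(1) by (intro prob_space.prob_space_distr) auto
  have "(\<integral>\<^sup>+x. ennreal (g (x - \<theta>)) \<partial>lborel) = 1"
    using emeasure_space_1 distr by (simp add: distributed_def emeasure_density)
  then have "integrable lborel (\<lambda>x. g (x - \<theta>))" and "(\<integral>x. g (x - \<theta>) \<partial>lborel) = 1"
    using nonneg by (auto intro!: integrableI_nonneg simp: integral_eq_nn_integral)
  then show "integrable lborel g" and "(\<integral>y. g y \<partial>lborel) = 1"
    using integrable_lborel_shift[of "\<lambda>x. g (x - \<theta>)" "- \<theta>"] integral_lborel_shift[of g \<theta>] by simp_all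
qed

lemma expectation_shifted_density:
  fixes g h :: "real \<Rightarrow> real"
  assumes distr: "distributed M lborel Z (\<lambda>x. ennreal (g (x - \<theta>)))"
    and nonneg: "\<And>x. 0 \<le> g x" and [measurable]: "h \<in> borel_measurable borel"
  shows "(\<integral>\<omega>. h (Z \<omega> - \<theta>) \<partial>M) = (\<integral>y. g y * h y \<partial>lborel)"
proof -
  have "(\<integral>\<omega>. h (Z \<omega> - \<theta>) \<partial>M) = (\<integral>x. g (x - \<theta>) * h (x - \<theta>) \<partial>lborel)"
    by (rule distributed_integral[OF distr, symmetric]) (auto simp: nonneg)
  also have "\<dots> = (\<integral>y. g y * h y \<partial>lborel)"
    by (rule integral_lborel_shift)
  finally show ?thesis .
qed

lemma integral_pos_if_continuous_pos:
  fixes q :: "real \<Rightarrow> real"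
  assumes "integrable lborel q" and "isCont q x" and "0 < q x" and nonneg: "\<And>y. 0 \<le> q y"
  shows "0 < (\<integral>y. q y \<partial>lborel)"
proof -
  obtain d where "0 < d" and d: "\<And>y. dist y x < d \<Longrightarrow> dist (q y) (q x) < q x / 2"
    using \<open>isCont q x\<close> \<open>0 < q x\<close> unfolding continuous_at_eps_delta by (meson half_gt_zero)
  have "q x / 2 * indicator {x - d / 2 .. x + d / 2} y \<le> q y" for y
  proof (cases "y \<in> {x - d / 2 .. x + d / 2}")
    case True
    with \<open>0 < d\<close> have "\<bar>q y - q x\<bar> < q x / 2"
      using d[of y] by (auto simp: dist_real_def)
    then have "q x / 2 < q y" by (simp only: abs_less_iff) linarith
    with True show ?thesis by simp
  qed (simp add: nonneg)
  then have "(\<integral>y. q x / 2 * indicator {x - d / 2 .. x + d / 2} y \<partial>lborel) \<le> (\<integral>y. q y \<partial>lborel)"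
    by (intro integral_mono \<open>integrable lborel q\<close> integrable_mult_right integrable_real_indicator)
      (auto simp: emeasure_lborel_Icc_eq)
  moreover have "(\<integral>y. q x / 2 * indicator {x - d / 2 .. x + d / 2} y \<partial>lborel) = q x / 2 * d"
    using \<open>0 < d\<close> by simp
  moreover have "0 < q x / 2 * d"
    using \<open>0 < d\<close> \<open>0 < q x\<close> by simp
  ultimately show ?thesis by linarith
qed

lemma integral_on_symmetric_interval_gt:
  fixes g :: "real \<Rightarrow> real"
  assumes "integrable lborel g" and "c < (\<integral>y. g y \<partial>lborel)"
  obtains A where "0 \<le> A" and "c < (\<integral>y. g y * indicator {-A..A} y \<partial>lborel)"
proof -
  have "(\<lambda>k::nat. \<integral>y. g y * indicator {-real k..real k} y \<partial>lborel) \<longlonglongrightarrow> (\<integral>y. g y \<partial>lborel)"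
  proof (rule integral_dominated_convergence[where w = "\<lambda>y. \<bar>g y\<bar>"])
    show "AE y in lborel. (\<lambda>k. g y * indicator {-real k..real k} y) \<longlonglongrightarrow> g y"
    proof (rule AE_I2)
      fix y :: real
      obtain N :: nat where "\<bar>y\<bar> \<le> real N" using real_arch_simple by blast
      then have "eventually (\<lambda>k. g y * indicator {-real k..real k} y = g y) sequentially"
        unfolding eventually_sequentially by (intro exI[of _ N]) (auto simp: indicator_def)
      then show "(\<lambda>k. g y * indicator {-real k..real k} y) \<longlonglongrightarrow> g y"
        by (rule tendsto_eventually)
    qed
  qed (use assms(1) in \<open>auto simp: indicator_def\<close>)
  then have "eventually (\<lambda>k::nat. c < (\<integral>y. g y * indicator {-real k..real k} y \<partial>lborel)) sequentially"
    using assms(2) by (rule order_tendstoD)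
  then obtain k :: nat where "c < (\<integral>y. g y * indicator {-real k..real k} y \<partial>lborel)"
    by (auto dest: eventually_happens)
  then show ?thesis by (intro that[of "real k"]) auto
qed

section \<open>The Pearson VII log-likelihood ratio\<close>

lemma one_plus_less_exp:
  fixes x :: real
  assumes "x \<noteq> 0"
  shows "1 + x < exp x"
proof (cases "1 + x \<le> 0")
  case False
  then have "ln (1 + x) < x"
    using ln_le_minus_one[of "1 + x"] ln_eq_minus_one[of "1 + x"] assms by fastforce
  with False show ?thesis
    by (metis exp_less_cancel_iff exp_ln not_le)
qed (use exp_gt_zero[of x] in linarith)

lemma one_plus_square_pos [simp]: "0 < 1 + x\<^sup>2"
  and one_plus_square_neq_zero [simp]: "1 + x\<^sup>2 \<noteq> 0"
  for x :: real
  by (smt (verit) zero_le_power2)+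

lemma pvii_c_nonneg: "0 \<le> pvii_c m"
  unfolding pvii_c_def by (auto intro!: integral_nonneg_AE)

lemma pvii_f_nonneg: "0 \<le> pvii_f m x"
  unfolding pvii_f_def using pvii_c_nonneg by simp

lemma pvii_f_eq_exp: "pvii_f m x = pvii_c m * exp (- m * ln (1 + x\<^sup>2))"
  by (simp add: pvii_f_def powr_def)

lemma borel_measurable_pvii_f [measurable]: "pvii_f m \<in> borel_measurable borel"
  unfolding pvii_f_eq_exp[abs_def] by measurable

lemma isCont_pvii_f: "isCont (pvii_f m) x"
  unfolding pvii_f_eq_exp[abs_def] by (intro continuous_intros) auto

text \<open>\<open>m * log_lik_ratio s y\<close> is the log-likelihood ratio \<open>ln f(y) - ln f(y - s)\<close> of the
  locations \<open>0\<close> and \<open>s\<close> at the centred observation \<open>y\<close> (lemma \<open>pvii_f_shift\<close>).\<close>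

definition log_lik_ratio :: "real \<Rightarrow> real \<Rightarrow> real" where
  "log_lik_ratio s y = ln (1 + (y - s)\<^sup>2) - ln (1 + y\<^sup>2)"

lemma pvii_f_shift: "pvii_f m (y - s) = pvii_f m y * exp (- m * log_lik_ratio s y)"
  unfolding pvii_f_eq_exp log_lik_ratio_def by (simp add: algebra_simps flip: exp_add)

lemma borel_measurable_log_lik_ratio [measurable]: "log_lik_ratio s \<in> borel_measurable borel"
  unfolding log_lik_ratio_def[abs_def] by measurable

lemma isCont_log_lik_ratio: "isCont (log_lik_ratio s) y"
  unfolding log_lik_ratio_def[abs_def] by (intro continuous_intros) auto

lemma one_plus_square_diff_le: "1 + (y - s)\<^sup>2 \<le> 2 * (1 + s\<^sup>2) * (1 + y\<^sup>2)"
  for y s :: real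
proof -
  have "(y - s)\<^sup>2 \<le> 2 * y\<^sup>2 + 2 * s\<^sup>2"
    using zero_le_power2[of "y + s"] by (simp add: power2_eq_square algebra_simps)
  moreover have "0 \<le> s\<^sup>2 * y\<^sup>2" by simp
  ultimately show ?thesis by (simp add: algebra_simps power2_eq_square)
qed

lemma log_lik_ratio_abs_le: "\<bar>log_lik_ratio s y\<bar> \<le> ln (2 * (1 + s\<^sup>2))"
proof -
  have split: "ln (2 * (1 + s\<^sup>2) * (1 + z\<^sup>2)) = ln (2 * (1 + s\<^sup>2)) + ln (1 + z\<^sup>2)" for z
    by (intro ln_mult_pos mult_pos_pos) simp_all
  have "ln (1 + (y - s)\<^sup>2) \<le> ln (2 * (1 + s\<^sup>2) * (1 + y\<^sup>2))"
    using one_plus_square_diff_le[of y s] by (intro ln_mono) simp_all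
  moreover have "ln (1 + y\<^sup>2) \<le> ln (2 * (1 + s\<^sup>2) * (1 + (y - s)\<^sup>2))"
    using one_plus_square_diff_le[of "y - s" "- s"] by (intro ln_mono) simp_all
  ultimately show ?thesis
    unfolding log_lik_ratio_def abs_le_iff split by linarith
qed

lemma ln_one_plus_square_lipschitz: "\<bar>ln (1 + a\<^sup>2) - ln (1 + b\<^sup>2)\<bar> \<le> \<bar>a - b\<bar>"
  for a b :: real
proof -
  have "((\<lambda>x. ln (1 + x\<^sup>2)) has_field_derivative 2 * x / (1 + x\<^sup>2)) (at x within UNIV)" for x :: real
    using one_plus_square_pos[of x] by (auto intro!: derivative_eq_intros simp: power2_eq_square)
  moreover have "norm (2 * x / (1 + x\<^sup>2)) \<le> 1" for x :: real
  proof -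
    have "2 * \<bar>x\<bar> \<le> 1 + x\<^sup>2"
      using zero_le_power2[of "\<bar>x\<bar> - 1"] by (simp add: power2_eq_square algebra_simps)
    then show ?thesis by (simp add: abs_mult divide_le_eq_1)
  qed
  ultimately show ?thesis
    using field_differentiable_bound[of UNIV "\<lambda>x. ln (1 + x\<^sup>2)" "\<lambda>x. 2 * x / (1 + x\<^sup>2)" 1 a b]
    by simp
qed

lemma log_lik_ratio_lipschitz: "\<bar>log_lik_ratio s y - log_lik_ratio t y\<bar> \<le> \<bar>s - t\<bar>"
  using ln_one_plus_square_lipschitz[of "y - s" "y - t"]
  unfolding log_lik_ratio_def by (simp add: abs_minus_commute)

lemma log_lik_ratio_ge_far:
  assumes "\<bar>y\<bar> \<le> A" and "A \<le> \<bar>s\<bar>"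
  shows "ln ((1 + (\<bar>s\<bar> - A)\<^sup>2) / (1 + A\<^sup>2)) \<le> log_lik_ratio s y"
proof -
  have "(\<bar>s\<bar> - A)\<^sup>2 \<le> (y - s)\<^sup>2"
    using assms by (intro abs_le_square_iff[THEN iffD1]) auto
  moreover have "y\<^sup>2 \<le> A\<^sup>2"
    using assms by (intro abs_le_square_iff[THEN iffD1]) auto
  ultimately have "ln (1 + (\<bar>s\<bar> - A)\<^sup>2) \<le> ln (1 + (y - s)\<^sup>2)" and "ln (1 + y\<^sup>2) \<le> ln (1 + A\<^sup>2)"
    by simp_all
  moreover have "ln ((1 + (\<bar>s\<bar> - A)\<^sup>2) / (1 + A\<^sup>2)) = ln (1 + (\<bar>s\<bar> - A)\<^sup>2) - ln (1 + A\<^sup>2)"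
    by (simp add: ln_div)
  ultimately show ?thesis
    unfolding log_lik_ratio_def by linarith
qed

lemma ln_far_ratio_bound:
  fixes A u :: real
  assumes "0 \<le> A" and u: "4 * (1 + A\<^sup>2) \<le> u"
  shows "ln (2 * (1 + u\<^sup>2)) < 3 * ln ((1 + (u - A)\<^sup>2) / (1 + A\<^sup>2))"
proof -
  define x where "x = (1 + (u - A)\<^sup>2) / (1 + A\<^sup>2)"
  have "A \<le> 1 + A\<^sup>2"
    using zero_le_power2[of "A - 1"] \<open>0 \<le> A\<close> by (simp add: power2_eq_square algebra_simps)
  moreover have "4 + 4 * A\<^sup>2 \<le> u"
    using u by simp
  ultimately have "4 \<le> u" and "A \<le> u / 2"
    using zero_le_power2[of A] \<open>0 \<le> A\<close> by linarith+
  have "u * (1 + A\<^sup>2) \<le> u * (u / 4)"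
    using u \<open>4 \<le> u\<close> by (intro mult_left_mono) auto
  also have "\<dots> = (u / 2)\<^sup>2"
    by (simp add: power2_eq_square)
  also have "\<dots> \<le> 1 + (u - A)\<^sup>2"
    using \<open>A \<le> u / 2\<close> \<open>4 \<le> u\<close> by (simp add: power_mono add_increasing)
  finally have "u \<le> x"
    by (simp add: x_def pos_le_divide_eq)
  have "4\<^sup>2 \<le> u\<^sup>2"
    using \<open>4 \<le> u\<close> by (intro power_mono) auto
  then have "2 * (1 + u\<^sup>2) < 4 * u\<^sup>2"
    by simp
  also have "\<dots> \<le> u ^ 3"
    using \<open>4 \<le> u\<close> by (simp add: power2_eq_square power3_eq_cube mult_right_mono)
  also have "\<dots> \<le> x ^ 3"
    using \<open>u \<le> x\<close> \<open>4 \<le> u\<close> by (simp add: power_mono)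
  finally have "ln (2 * (1 + u\<^sup>2)) < ln (x ^ 3)"
    using \<open>u \<le> x\<close> \<open>4 \<le> u\<close> by (intro ln_less_cancel_iff[THEN iffD2] mult_pos_pos) auto
  also have "\<dots> = 3 * ln x"
    using \<open>u \<le> x\<close> \<open>4 \<le> u\<close> by (simp add: ln_realpow)
  finally show ?thesis unfolding x_def .
qed

lemma average_log_lik_ratio_lipschitz:
  fixes y :: "nat \<Rightarrow> real" and n :: nat
  shows "1-lipschitz_on K (\<lambda>s. (\<Sum>i<n. log_lik_ratio s (y i)) / n)"
proof (rule lipschitz_onI)
  fix s t
  have "\<bar>(\<Sum>i<n. log_lik_ratio s (y i)) - (\<Sum>i<n. log_lik_ratio t (y i))\<bar>
      = \<bar>\<Sum>i<n. log_lik_ratio s (y i) - log_lik_ratio t (y i)\<bar>"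
    by (simp add: sum_subtractf)
  also have "\<dots> \<le> (\<Sum>i<n. \<bar>log_lik_ratio s (y i) - log_lik_ratio t (y i)\<bar>)"
    by (rule sum_abs)
  also have "\<dots> \<le> (\<Sum>i<n. \<bar>s - t\<bar>)"
    by (intro sum_mono log_lik_ratio_lipschitz)
  finally have "\<bar>(\<Sum>i<n. log_lik_ratio s (y i)) - (\<Sum>i<n. log_lik_ratio t (y i))\<bar> \<le> n * \<bar>s - t\<bar>"
    by simp
  then show "dist ((\<Sum>i<n. log_lik_ratio s (y i)) / n) ((\<Sum>i<n. log_lik_ratio t (y i)) / n) \<le> 1 * dist s t"
    by (cases "n = 0") (simp_all add: dist_real_def divide_le_eq mult.commute flip: diff_divide_distrib)
qed simp

lemma sum_log_lik_ratio_pos_far: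
  fixes y :: "nat \<Rightarrow> real"
  assumes "0 < n" and "0 \<le> A" and s: "4 * (1 + A\<^sup>2) \<le> \<bar>s\<bar>"
    and most: "3 * real n \<le> 4 * (\<Sum>i<n. indicator {-A..A} (y i))"
  shows "0 < (\<Sum>i<n. log_lik_ratio s (y i))"
proof -
  \<comment> \<open>Observations in \<open>[-A, A]\<close> contribute at least \<open>a\<close>, the others at least \<open>-b\<close>;
    with at least \<open>3n/4\<close> of them inside, the sum is at least \<open>n (3a - b) / 4 > 0\<close>.\<close>
  define a where "a = ln ((1 + (\<bar>s\<bar> - A)\<^sup>2) / (1 + A\<^sup>2))"
  define b where "b = ln (2 * (1 + s\<^sup>2))"
  have "b < 3 * a"
    using ln_far_ratio_bound[OF \<open>0 \<le> A\<close> s] by (simp add: a_def b_def)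
  moreover have "0 \<le> b"
    by (simp add: b_def)
  ultimately have "0 < a + b" by linarith
  have "A \<le> \<bar>s\<bar>"
    using s zero_le_power2[of "A - 1"] \<open>0 \<le> A\<close> by (simp add: power2_eq_square algebra_simps)
  have "(a + b) * indicator {-A..A} (y i) - b \<le> log_lik_ratio s (y i)" for i
  proof (cases "y i \<in> {-A..A}")
    case True
    then show ?thesis
      using log_lik_ratio_ge_far[of "y i" A s] \<open>A \<le> \<bar>s\<bar>\<close> by (simp add: a_def abs_le_iff)
  next
    case False
    then show ?thesis
      using log_lik_ratio_abs_le[of s "y i"] by (simp add: b_def abs_le_iff)
  qed
  then have "(a + b) * (\<Sum>i<n. indicator {-A..A} (y i)) - n * b \<le> (\<Sum>i<n. log_lik_ratio s (y i))"
    using sum_mono[of "{..<n}" "\<lambda>i. (a + b) * indicator {-A..A} (y i) - b"]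
    by (simp add: sum_distrib_left sum_subtractf)
  moreover have "(a + b) * (3 * n / 4) \<le> (a + b) * (\<Sum>i<n. indicator {-A..A} (y i))"
    using most \<open>0 < a + b\<close> by (intro mult_left_mono) auto
  moreover have "0 < (a + b) * (3 * n / 4) - n * b"
    using \<open>b < 3 * a\<close> \<open>0 < n\<close> by (simp add: algebra_simps)
  ultimately show ?thesis by linarith
qed

lemma prod_pvii_f_shift_less:
  assumes "0 < pvii_c m" and "0 < m" and pos: "0 < (\<Sum>i\<in>I. log_lik_ratio s (y i))"
  shows "(\<Prod>i\<in>I. pvii_f m (y i - s)) < (\<Prod>i\<in>I. pvii_f m (y i))"
proof -
  have "finite I"
    using pos by (metis less_irrefl sum.infinite)
  then have "(\<Prod>i\<in>I. pvii_f m (y i - s))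
      = (\<Prod>i\<in>I. pvii_f m (y i)) * exp (- m * (\<Sum>i\<in>I. log_lik_ratio s (y i)))"
    by (simp add: pvii_f_shift prod.distrib exp_sum sum_distrib_left)
  moreover have "0 < (\<Prod>i\<in>I. pvii_f m (y i))"
    using \<open>0 < pvii_c m\<close> by (intro prod_pos) (simp add: pvii_f_eq_exp)
  moreover have "exp (- m * (\<Sum>i\<in>I. log_lik_ratio s (y i))) < 1"
    using \<open>0 < m\<close> pos by simp
  ultimately show ?thesis by simp
qed

text \<open>\<open>m * mean_log_lik_ratio m s\<close> is the Kullback-Leibler divergence of \<open>f(\<cdot> - s)\<close> from \<open>f\<close>.\<close>

definition mean_log_lik_ratio :: "real \<Rightarrow> real \<Rightarrow> real" where
  "mean_log_lik_ratio m s = (\<integral>y. pvii_f m y * log_lik_ratio s y \<partial>lborel)"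

text \<open>The assumptions hold exactly when \<open>m > 1/2\<close>. Integrability is not derived from
  \<open>m > 1/2\<close> but read off the distributional hypothesis (locale \<open>pvii_sample\<close>), so only
  \<open>m > 0\<close> is ever used.\<close>

locale pvii_density =
  fixes m :: real
  assumes m_pos: "0 < m"
    and integrable_pvii_f: "integrable lborel (pvii_f m)"
    and integral_pvii_f: "(\<integral>y. pvii_f m y \<partial>lborel) = 1"
begin

lemma pvii_c_pos: "0 < pvii_c m"
proof -
  have "pvii_c m \<noteq> 0"
    using integral_pvii_f by (auto simp: pvii_f_def)
  with pvii_c_nonneg show ?thesis
    by (simp add: order_less_le)
qed

lemma integrable_pvii_f_mult:
  assumes [measurable]: "h \<in> borel_measurable borel" and bounded: "\<And>y. \<bar>h y\<bar> \<le> B"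
  shows "integrable lborel (\<lambda>y. pvii_f m y * h y)"
proof (rule Bochner_Integration.integrable_bound)
  show "integrable lborel (\<lambda>y. B * pvii_f m y)"
    using integrable_pvii_f by simp
  show "AE y in lborel. norm (pvii_f m y * h y) \<le> norm (B * pvii_f m y)"
  proof (rule AE_I2)
    fix y
    have "pvii_f m y * \<bar>h y\<bar> \<le> pvii_f m y * \<bar>B\<bar>"
      using bounded[of y] pvii_f_nonneg[of m y] by (intro mult_left_mono) auto
    then show "norm (pvii_f m y * h y) \<le> norm (B * pvii_f m y)"
      using pvii_f_nonneg[of m y] by (simp add: abs_mult mult.commute)
  qed
qed simp

lemma integrable_pvii_f_mult_log_lik_ratio: "integrable lborel (\<lambda>y. pvii_f m y * log_lik_ratio s y)"
  using log_lik_ratio_abs_le by (intro integrable_pvii_f_mult) auto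

lemma mean_log_lik_ratio_lipschitz: "1-lipschitz_on K (mean_log_lik_ratio m)"
proof (rule lipschitz_onI)
  fix s t
  have "\<bar>mean_log_lik_ratio m s - mean_log_lik_ratio m t\<bar>
      = \<bar>\<integral>y. pvii_f m y * (log_lik_ratio s y - log_lik_ratio t y) \<partial>lborel\<bar>"
    using integrable_pvii_f_mult_log_lik_ratio
    by (simp add: mean_log_lik_ratio_def right_diff_distrib)
  also have "\<dots> \<le> (\<integral>y. pvii_f m y * \<bar>s - t\<bar> \<partial>lborel)"
  proof (intro integral_abs_bound_integral)
    show "\<bar>pvii_f m y * (log_lik_ratio s y - log_lik_ratio t y)\<bar> \<le> pvii_f m y * \<bar>s - t\<bar>" for y
      using log_lik_ratio_lipschitz[of s y t] pvii_f_nonneg[of m y]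
      by (simp add: abs_mult mult_left_mono)
  qed (use integrable_pvii_f_mult_log_lik_ratio integrable_pvii_f in \<open>simp_all add: right_diff_distrib\<close>)
  also have "\<dots> = \<bar>s - t\<bar>"
    using integral_pvii_f by simp
  finally show "dist (mean_log_lik_ratio m s) (mean_log_lik_ratio m t) \<le> 1 * dist s t"
    by (simp add: dist_real_def)
qed simp

lemma mean_log_lik_ratio_pos:
  assumes "s \<noteq> 0"
  shows "0 < mean_log_lik_ratio m s"
proof -
  define q where "q y = pvii_f m y * (exp (- m * log_lik_ratio s y) - 1 + m * log_lik_ratio s y)" for y
  \<comment> \<open>\<open>q \<ge> 0\<close> because \<open>exp (- x) \<ge> 1 - x\<close>; and since \<open>pvii_f m y * exp (- m * log_lik_ratio s y)\<close>
    is the shifted density \<open>pvii_f m (y - s)\<close>, \<open>q\<close> integrates to \<open>m\<close> times the mean.\<close>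
  have q_eq: "q y = pvii_f m (y - s) - pvii_f m y + m * (pvii_f m y * log_lik_ratio s y)" for y
    by (simp add: q_def pvii_f_shift algebra_simps)
  have "integrable lborel q"
    unfolding q_eq[abs_def]
    using integrable_pvii_f integrable_lborel_shift[OF integrable_pvii_f] integrable_pvii_f_mult_log_lik_ratio
    by simp
  moreover have "(\<integral>y. q y \<partial>lborel) = m * mean_log_lik_ratio m s"
    unfolding q_eq[abs_def] mean_log_lik_ratio_def
    using integrable_pvii_f integrable_lborel_shift[OF integrable_pvii_f] integrable_pvii_f_mult_log_lik_ratio
    by (simp add: integral_lborel_shift)
  moreover have "0 < (\<integral>y. q y \<partial>lborel)"
  proof (rule integral_pos_if_continuous_pos[where x = 0])
    show "integrable lborel q" by fact
    show "isCont q 0"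
      unfolding q_def by (intro continuous_intros isCont_pvii_f isCont_log_lik_ratio)
    have "0 < m * log_lik_ratio s 0"
      using m_pos \<open>s \<noteq> 0\<close> by (simp add: log_lik_ratio_def)
    then have "- m * log_lik_ratio s 0 \<noteq> 0" by linarith
    from one_plus_less_exp[OF this]
    have "0 < exp (- m * log_lik_ratio s 0) - 1 + m * log_lik_ratio s 0" by simp
    then show "0 < q 0"
      using pvii_c_pos by (simp add: q_def pvii_f_eq_exp)
    show "0 \<le> q y" for y
      using pvii_f_nonneg exp_ge_add_one_self[of "- m * log_lik_ratio s y"]
      by (simp add: q_def)
  qed
  ultimately show ?thesis
    using m_pos by (simp add: zero_less_mult_iff)
qed

lemma maximizer_near:
  fixes y :: "nat \<Rightarrow> real"
  assumes pos: "\<forall>s. \<epsilon> \<le> \<bar>s\<bar> \<longrightarrow> 0 < (\<Sum>i<n. log_lik_ratio s (y i - \<theta>))"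
    and max: "(\<Prod>i<n. pvii_f m (y i - \<theta>)) \<le> (\<Prod>i<n. pvii_f m (y i - t))"
  shows "\<bar>t - \<theta>\<bar> < \<epsilon>"
proof (rule ccontr)
  assume "\<not> \<bar>t - \<theta>\<bar> < \<epsilon>"
  then have "0 < (\<Sum>i<n. log_lik_ratio (t - \<theta>) (y i - \<theta>))"
    using pos by auto
  then have "(\<Prod>i<n. pvii_f m (y i - \<theta> - (t - \<theta>))) < (\<Prod>i<n. pvii_f m (y i - \<theta>))"
    by (rule prod_pvii_f_shift_less[OF pvii_c_pos m_pos])
  with max show False by simp
qed

end

section \<open>Strong consistency\<close>

locale pvii_sample = prob_space M for M :: "'a measure" +
  fixes m \<theta> :: real and X :: "nat \<Rightarrow> 'a \<Rightarrow> real"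
  assumes m_pos: "0 < m"
    and indep: "indep_vars (\<lambda>_. borel) X UNIV"
    and distributed_X: "\<And>i. distributed M lborel (X i) (\<lambda>x. ennreal (pvii_f m (x - \<theta>)))"

sublocale pvii_sample \<subseteq> pvii_density
  using m_pos integrable_shifted_density[OF prob_space_axioms distributed_X pvii_f_nonneg]
    integral_shifted_density[OF prob_space_axioms distributed_X pvii_f_nonneg]
  by unfold_locales

context pvii_sample
begin

lemma borel_measurable_X [measurable]: "X i \<in> borel_measurable M"
  using indep by (auto simp: indep_vars_def)

lemma distr_X_eq: "distr M borel (X i) = distr M borel (X 0)"
proof -
  have "distr M borel (X j) = density lborel (\<lambda>x. ennreal (pvii_f m (x - \<theta>)))" for j
    using distributed_X[of j] by (simp add: distributed_def distr_def)
  then show ?thesis by simp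
qed

lemma AE_average_tendsto:
  assumes [measurable]: "h \<in> borel_measurable borel" and bounded: "\<And>y. \<bar>h y\<bar> \<le> B"
  shows "AE \<omega> in M. (\<lambda>n. (\<Sum>i<n. h (X i \<omega> - \<theta>)) / n) \<longlonglongrightarrow> (\<integral>y. pvii_f m y * h y \<partial>lborel)"
proof -
  let ?Y = "\<lambda>i \<omega>. h (X i \<omega> - \<theta>)"
  have "indep_vars (\<lambda>_. borel) ?Y UNIV"
    by (rule indep_vars_compose2[OF indep, where Y = "\<lambda>_ x. h (x - \<theta>)" and N = "\<lambda>_. borel"]) simp
  moreover have "distr M borel (?Y i) = distr M borel (?Y 0)" for i
  proof -
    have "distr M borel (?Y j) = distr (distr M borel (X j)) borel (\<lambda>x. h (x - \<theta>))" for j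
      by (subst distr_distr) (auto simp: comp_def)
    then show ?thesis using distr_X_eq[of i] by simp
  qed
  moreover have "expectation (?Y 0) = (\<integral>y. pvii_f m y * h y \<partial>lborel)"
    by (rule expectation_shifted_density[OF distributed_X pvii_f_nonneg]) simp
  ultimately show ?thesis
    using strong_law_bounded_iid[of ?Y B] bounded by simp
qed

lemma AE_eventually_sum_log_lik_ratio_pos_far:
  obtains S where
    "AE \<omega> in M. eventually (\<lambda>n. \<forall>s. S \<le> \<bar>s\<bar> \<longrightarrow> 0 < (\<Sum>i<n. log_lik_ratio s (X i \<omega> - \<theta>))) sequentially"
proof -
  obtain A where "0 \<le> A" and mass: "7/8 < (\<integral>y. pvii_f m y * indicator {-A..A} y \<partial>lborel)"
    using integral_on_symmetric_interval_gt[OF integrable_pvii_f, of "7/8"] integral_pvii_f by auto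
  have "AE \<omega> in M. (\<lambda>n. (\<Sum>i<n. indicator {-A..A} (X i \<omega> - \<theta>)) / n)
      \<longlonglongrightarrow> (\<integral>y. pvii_f m y * indicator {-A..A} y \<partial>lborel)"
    by (rule AE_average_tendsto[where B = 1]) (auto simp: indicator_def)
  then have "AE \<omega> in M. eventually (\<lambda>n. 3/4 < (\<Sum>i<n. indicator {-A..A} (X i \<omega> - \<theta>)) / real n) sequentially"
    using mass by (elim eventually_mono) (rule order_tendstoD(1), auto)
  then have "AE \<omega> in M. eventually (\<lambda>n. \<forall>s. 4 * (1 + A\<^sup>2) \<le> \<bar>s\<bar> \<longrightarrow>
      0 < (\<Sum>i<n. log_lik_ratio s (X i \<omega> - \<theta>))) sequentially"
  proof (elim eventually_mono, intro allI impI)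
    fix \<omega> n s
    assume frac: "3/4 < (\<Sum>i<n. indicator {-A..A} (X i \<omega> - \<theta>)) / real n" and s: "4 * (1 + A\<^sup>2) \<le> \<bar>s\<bar>"
    then have "0 < n" by (cases n) auto
    with frac show "0 < (\<Sum>i<n. log_lik_ratio s (X i \<omega> - \<theta>))"
      by (intro sum_log_lik_ratio_pos_far[OF \<open>0 < n\<close> \<open>0 \<le> A\<close> s]) (simp add: field_simps)
  qed
  then show thesis by (rule that)
qed

lemma AE_eventually_sum_log_lik_ratio_pos_on_compact:
  assumes "compact K" and "0 \<notin> K"
  shows "AE \<omega> in M. eventually (\<lambda>n. \<forall>s\<in>K. 0 < (\<Sum>i<n. log_lik_ratio s (X i \<omega> - \<theta>))) sequentially"
proof (cases "K = {}")
  case False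
  obtain s\<^sub>0 where "s\<^sub>0 \<in> K" and min: "\<And>s. s \<in> K \<Longrightarrow> mean_log_lik_ratio m s\<^sub>0 \<le> mean_log_lik_ratio m s"
    using continuous_attains_inf[OF \<open>compact K\<close> False
        lipschitz_on_continuous_on[OF mean_log_lik_ratio_lipschitz]] by blast
  define \<kappa> where "\<kappa> = mean_log_lik_ratio m s\<^sub>0"
  have "0 < \<kappa>"
    using \<open>s\<^sub>0 \<in> K\<close> \<open>0 \<notin> K\<close> by (auto simp: \<kappa>_def intro!: mean_log_lik_ratio_pos)
  have "AE \<omega> in M. eventually (\<lambda>n. \<forall>s\<in>K.
      \<bar>(\<Sum>i<n. log_lik_ratio s (X i \<omega> - \<theta>)) / n - mean_log_lik_ratio m s\<bar> < \<kappa>) sequentially"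
  proof (rule AE_eventually_uniform_on_compact[OF \<open>compact K\<close> \<open>0 < \<kappa>\<close>])
    show "AE \<omega> in M. (\<lambda>n. (\<Sum>i<n. log_lik_ratio t (X i \<omega> - \<theta>)) / n) \<longlonglongrightarrow> mean_log_lik_ratio m t" for t
      unfolding mean_log_lik_ratio_def using log_lik_ratio_abs_le by (intro AE_average_tendsto) auto
    show "1-lipschitz_on K (\<lambda>t. (\<Sum>i<n. log_lik_ratio t (X i \<omega> - \<theta>)) / n)" for n \<omega>
      by (rule average_log_lik_ratio_lipschitz)
  qed (rule mean_log_lik_ratio_lipschitz)
  then show ?thesis
  proof (elim eventually_mono, intro ballI)
    fix \<omega> n s
    assume "\<forall>s\<in>K. \<bar>(\<Sum>i<n. log_lik_ratio s (X i \<omega> - \<theta>)) / n - mean_log_lik_ratio m s\<bar> < \<kappa>" and "s \<in> K"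
    with min[of s] have "0 < (\<Sum>i<n. log_lik_ratio s (X i \<omega> - \<theta>)) / n"
      unfolding \<kappa>_def by (auto simp: abs_less_iff)
    then show "0 < (\<Sum>i<n. log_lik_ratio s (X i \<omega> - \<theta>))"
      by (simp add: zero_less_divide_iff)
  qed
qed simp

lemma AE_eventually_sum_log_lik_ratio_pos:
  assumes "0 < \<epsilon>"
  shows "AE \<omega> in M. eventually (\<lambda>n. \<forall>s. \<epsilon> \<le> \<bar>s\<bar> \<longrightarrow> 0 < (\<Sum>i<n. log_lik_ratio s (X i \<omega> - \<theta>))) sequentially"
proof -
  obtain S where far:
    "AE \<omega> in M. eventually (\<lambda>n. \<forall>s. S \<le> \<bar>s\<bar> \<longrightarrow> 0 < (\<Sum>i<n. log_lik_ratio s (X i \<omega> - \<theta>))) sequentially"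
    by (rule AE_eventually_sum_log_lik_ratio_pos_far)
  have "compact ({-S..-\<epsilon>} \<union> {\<epsilon>..S})" and "0 \<notin> {-S..-\<epsilon>} \<union> {\<epsilon>..S}"
    using assms by auto
  from AE_eventually_sum_log_lik_ratio_pos_on_compact[OF this] far show ?thesis
  proof (eventually_elim, elim eventually_rev_mp, intro always_eventually allI impI)
    fix \<omega> n s
    assume "\<forall>s\<in>{-S..-\<epsilon>} \<union> {\<epsilon>..S}. 0 < (\<Sum>i<n. log_lik_ratio s (X i \<omega> - \<theta>))"
      and "\<forall>s. S \<le> \<bar>s\<bar> \<longrightarrow> 0 < (\<Sum>i<n. log_lik_ratio s (X i \<omega> - \<theta>))" and "\<epsilon> \<le> \<bar>s\<bar>"
    then show "0 < (\<Sum>i<n. log_lik_ratio s (X i \<omega> - \<theta>))"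
      by (cases "S \<le> \<bar>s\<bar>") (auto simp: abs_if split: if_splits)
  qed
qed

lemma AE_eventually_maximizer_near:
  fixes est :: "nat \<Rightarrow> (nat \<Rightarrow> real) \<Rightarrow> real"
  assumes "0 < \<epsilon>"
    and est_max: "\<And>n x t. x \<in> space (Pi\<^sub>M {..<n} (\<lambda>_. (borel :: real measure))) \<Longrightarrow>
        (\<Prod>i<n. pvii_f m (x i - t)) \<le> (\<Prod>i<n. pvii_f m (x i - est n x))"
  shows "AE \<omega> in M. eventually (\<lambda>n. dist (est n (restrict (\<lambda>i. X i \<omega>) {..<n})) \<theta> < \<epsilon>) sequentially"
  using AE_eventually_sum_log_lik_ratio_pos[OF \<open>0 < \<epsilon>\<close>]
proof (elim eventually_mono)
  fix \<omega> n
  assume pos: "\<forall>s. \<epsilon> \<le> \<bar>s\<bar> \<longrightarrow> 0 < (\<Sum>i<n. log_lik_ratio s (X i \<omega> - \<theta>))"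
  define x where "x = restrict (\<lambda>i. X i \<omega>) {..<n}"
  have "x \<in> space (Pi\<^sub>M {..<n} (\<lambda>_. borel))"
    by (simp add: x_def space_PiM)
  then have "(\<Prod>i<n. pvii_f m (x i - \<theta>)) \<le> (\<Prod>i<n. pvii_f m (x i - est n x))"
    by (rule est_max)
  moreover have "(\<Prod>i<n. pvii_f m (x i - t)) = (\<Prod>i<n. pvii_f m (X i \<omega> - t))" for t
    by (intro prod.cong) (auto simp: x_def)
  ultimately have "\<bar>est n x - \<theta>\<bar> < \<epsilon>"
    using maximizer_near[where y = "\<lambda>i. X i \<omega>", OF pos] by simp
  then show "dist (est n (restrict (\<lambda>i. X i \<omega>) {..<n})) \<theta> < \<epsilon>"
    by (simp add: x_def dist_real_def)
qed

end

theorem theorem1p1: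
  fixes m \<theta> :: real
    and M :: "'a measure"
    and X :: "nat \<Rightarrow> 'a \<Rightarrow> real"
    and est :: "nat \<Rightarrow> (nat \<Rightarrow> real) \<Rightarrow> real"
  assumes m: "m > 1/2"
    and P: "prob_space M"
    and indep: "prob_space.indep_vars M (\<lambda>_. borel) X UNIV"
    and distr: "\<And>i. distributed M lborel (X i) (\<lambda>x. ennreal (pvii_f m (x - \<theta>)))"
    and est_meas: "\<And>n. est n \<in> borel_measurable (Pi\<^sub>M {..<n} (\<lambda>_. borel))"
    and est_max: "\<And>n x t. x \<in> space (Pi\<^sub>M {..<n} (\<lambda>_. (borel :: real measure))) \<Longrightarrow>
        (\<Prod>i<n. pvii_f m (x i - t)) \<le> (\<Prod>i<n. pvii_f m (x i - est n x))"
  shows "AE \<omega> in M. (\<lambda>n. est n (restrict (\<lambda>i. X i \<omega>) {..<n})) \<longlonglongrightarrow> \<theta>"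
proof -
  interpret pvii_sample M m \<theta> X
    using m P indep distr by (simp add: pvii_sample_def pvii_sample_axioms_def)
  show ?thesis
    by (intro AE_LIMSEQ_if_AE_eventually_dist_less AE_eventually_maximizer_near est_max)
qed

end
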